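(* For every $\beta>0$, the origin is the unique globally asymptotically stable equilibrium of the ODE $\dot x=h(x)$ on $\mathbb R^n\times\mathbb R^n$, where $$h(x_1,x_2)=\begin{bmatrix}-Dx_1+\gamma DPM(x_2)\\ \beta Dx_1-\beta Dx_2\end{bmatrix}.$$
   Context: Finite MDP with states $\mathcal S$, actions $\mathcal A$, kernel $P$, discount $\gamma\in[0,1)$; $n=|\mathcal S||\mathcal A|$. $D$ is the diagonal matrix of a probability distribution $d$ on $\mathcal S\times\mathcal A$ with $d(s,a)>0$ for all $(s,a)$; $P$ is the $n\times|\mathcal S|$ matrix with row $(s,a)$ equal to $P(\cdot\mid s,a)$; $M(Q)(s)=\max_aQ(s,a)$. Globally asymptotically stable means Lyapunov stable and every solution converges to it. *)

theory Defs
  imports "HOL-Analysis.Analysis"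
begin

definition is_solution :: "('v::real_normed_vector \<Rightarrow> 'v) \<Rightarrow> (real \<Rightarrow> 'v) \<Rightarrow> bool" where
  "is_solution f x \<longleftrightarrow> (\<forall>t\<ge>0. (x has_vector_derivative f (x t)) (at t within {0..}))"

definition equilibrium :: "('v::real_normed_vector \<Rightarrow> 'v) \<Rightarrow> 'v \<Rightarrow> bool" where
  "equilibrium f e \<longleftrightarrow> f e = 0"

definition lyapunov_stable :: "('v::real_normed_vector \<Rightarrow> 'v) \<Rightarrow> 'v \<Rightarrow> bool" where
  "lyapunov_stable f e \<longleftrightarrow>
     (\<forall>\<epsilon>>0. \<exists>\<delta>>0. \<forall>x. is_solution f x \<and> dist (x 0) e < \<delta> \<longrightarrow> (\<forall>t\<ge>0. dist (x t) e < \<epsilon>))"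

definition globally_asymptotically_stable :: "('v::real_normed_vector \<Rightarrow> 'v) \<Rightarrow> 'v \<Rightarrow> bool" where
  "globally_asymptotically_stable f e \<longleftrightarrow>
     lyapunov_stable f e \<and> (\<forall>x. is_solution f x \<longrightarrow> (x \<longlongrightarrow> e) at_top)"

text \<open>MDP operators. Vectors in R^n, n = |S||A|, are indexed by state-action pairs.\<close>

definition Dmat :: "('s \<times> 'a \<Rightarrow> real) \<Rightarrow> real ^ ('s::finite \<times> 'a::finite) \<Rightarrow> real ^ ('s \<times> 'a)" where
  "Dmat d x = (\<chi> i. d i * x $ i)"

definition Mmax :: "real ^ ('s::finite \<times> 'a::finite) \<Rightarrow> 's \<Rightarrow> real" where
  "Mmax Q s = (MAX b\<in>(UNIV::'a set). Q $ (s, b))"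

definition Pmat :: "('s \<times> 'a \<Rightarrow> 's \<Rightarrow> real) \<Rightarrow> ('s::finite \<Rightarrow> real) \<Rightarrow> real ^ ('s \<times> 'a::finite)" where
  "Pmat P v = (\<chi> i. \<Sum>s'\<in>UNIV. P i s' * v s')"

definition hfield :: "('s \<times> 'a \<Rightarrow> real) \<Rightarrow> ('s \<times> 'a \<Rightarrow> 's \<Rightarrow> real) \<Rightarrow> real \<Rightarrow> real
    \<Rightarrow> (real ^ ('s::finite \<times> 'a::finite)) \<times> (real ^ ('s \<times> 'a))
    \<Rightarrow> (real ^ ('s \<times> 'a)) \<times> (real ^ ('s \<times> 'a))" where
  "hfield d P \<gamma> \<beta> z = (case z of (x1, x2) \<Rightarrow>
     (- Dmat d x1 + \<gamma> *\<^sub>R Dmat d (Pmat P (Mmax x2)),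
      \<beta> *\<^sub>R Dmat d x1 - \<beta> *\<^sub>R Dmat d x2))"

end

theory Submission
  imports Defs
begin

text \<open>Fix a with \<gamma> < a < 1 and consider the boxes |x1 i| \<le> a r, |x2 i| \<le> r, i.e. the balls
  of the weighted norm max (\<parallel>x1\<parallel> / a) \<parallel>x2\<parallel> built from sup norms. Because P M is nonexpansive
  in the sup norm, on a face x1 i = \<plusminus>a r the field pushes x1 i inward at speed at least
  d i (a - \<gamma>) r, and on a face x2 i = \<plusminus>r it pushes x2 i inward at speed at least
  \<beta> d i (1 - a) r. Hence no solution can leave a box whose radius shrinks like r exp (- c t) for
  small c > 0; this barrier argument on the 4n signed coordinates needs no uniqueness of
  solutions. The exponential bound gives global asymptotic stability of 0, and 0 is the only
  such equilibrium because every equilibrium is a constant solution.\<close>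

lemma real_nonneg_induct:
  fixes P :: "real \<Rightarrow> bool"
  assumes zero: "P 0"
    and left: "\<And>T. T > 0 \<Longrightarrow> (\<And>s. 0 \<le> s \<Longrightarrow> s < T \<Longrightarrow> P s) \<Longrightarrow> P T"
    and right: "\<And>t. t \<ge> 0 \<Longrightarrow> P t \<Longrightarrow> eventually P (at_right t)"
    and "t \<ge> 0"
  shows "P t"
proof (rule ccontr)
  assume "\<not> P t"
  define S where "S = {s. 0 \<le> s \<and> \<not> P s}"
  define s0 where "s0 = Inf S"
  have "t \<in> S" using \<open>\<not> P t\<close> \<open>t \<ge> 0\<close> by (simp add: S_def)
  have bdd: "bdd_below S" by (auto simp: S_def bdd_below_def)
  have s0_nonneg: "0 \<le> s0"
    unfolding s0_def using \<open>t \<in> S\<close> by (intro cInf_greatest) (auto simp: S_def)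
  have before: "P r" if "0 \<le> r" "r < s0" for r
    using cInf_lower[OF _ bdd, of r] that by (auto simp: S_def s0_def)
  have "P s0" using zero left[of s0] before s0_nonneg by (cases "s0 = 0") auto
  then obtain b where "b > s0" and after: "\<And>y. s0 < y \<Longrightarrow> y < b \<Longrightarrow> P y"
    using right[OF s0_nonneg] by (auto simp: eventually_at_right_field)
  have "b \<le> s0" unfolding s0_def
  proof (rule cInf_greatest)
    show "S \<noteq> {}" using \<open>t \<in> S\<close> by auto
    show "b \<le> s" if "s \<in> S" for s
      using that before after \<open>P s0\<close> by (force simp: S_def not_less_iff_gr_or_eq)
  qed
  with \<open>b > s0\<close> show False by simp
qed

lemma nonpos_from_left:
  fixes g :: "real \<Rightarrow> real"
  assumes "continuous (at T within {0..}) g" and "T > 0"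
    and before: "\<And>s. 0 \<le> s \<Longrightarrow> s < T \<Longrightarrow> g s \<le> 0"
  shows "g T \<le> 0"
proof -
  have "at_left T \<le> at T within {0..}"
    using \<open>T > 0\<close> at_within_Icc_at_left[of 0 T] by (metis at_le atLeastAtMost_iff atLeast_iff subsetI)
  with assms(1) have "(g \<longlongrightarrow> g T) (at_left T)"
    by (auto simp: continuous_within intro: tendsto_mono)
  moreover have "eventually (\<lambda>s. g s \<le> 0) (at_left T)"
    using eventually_at_left_real[OF \<open>T > 0\<close>] by eventually_elim (use before in auto)
  ultimately show "g T \<le> 0" by (rule tendsto_upperbound) simp
qed

lemma eventually_nonpos_at_right:
  fixes g :: "real \<Rightarrow> real"
  assumes deriv: "(g has_real_derivative D) (at t within {0..})" and "t \<ge> 0"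
    and "g t \<le> 0" and touching: "g t = 0 \<Longrightarrow> D < 0"
  shows "eventually (\<lambda>s. g s \<le> 0) (at_right t)"
proof (cases "g t < 0")
  case True
  have "at_right t \<le> at t within {0..}"
    using \<open>t \<ge> 0\<close> by (intro at_le) auto
  with DERIV_continuous[OF deriv] have "(g \<longlongrightarrow> g t) (at_right t)"
    by (auto simp: continuous_within intro: tendsto_mono)
  from order_tendstoD(2)[OF this True] show ?thesis by eventually_elim simp
next
  case False
  with \<open>g t \<le> 0\<close> have "g t = 0" by simp
  from has_real_derivative_neg_dec_right[OF deriv touching[OF this]]
  obtain \<delta> where "\<delta> > 0" and dec: "\<And>h. h > 0 \<Longrightarrow> h < \<delta> \<Longrightarrow> g (t + h) < g t"
    using \<open>t \<ge> 0\<close> by auto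
  show ?thesis unfolding eventually_at_right_field
  proof (intro exI conjI allI impI)
    show "t < t + \<delta>" using \<open>\<delta> > 0\<close> by simp
    fix y assume "t < y" "y < t + \<delta>"
    then show "g y \<le> 0" using dec[of "y - t"] \<open>g t = 0\<close> by simp
  qed
qed

lemma finite_family_barrier:
  fixes g g' :: "'k::finite \<Rightarrow> real \<Rightarrow> real"
  assumes deriv: "\<And>k t. t \<ge> 0 \<Longrightarrow> (g k has_real_derivative g' k t) (at t within {0..})"
    and start: "\<And>k. g k 0 \<le> 0"
    and boundary: "\<And>k t. t \<ge> 0 \<Longrightarrow> (\<And>j. g j t \<le> 0) \<Longrightarrow> g k t = 0 \<Longrightarrow> g' k t < 0"
    and "t \<ge> 0"
  shows "g k t \<le> 0"
proof -
  have "\<forall>k. g k t \<le> 0"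
  proof (rule real_nonneg_induct[OF _ _ _ \<open>t \<ge> 0\<close>])
    show "\<forall>k. g k 0 \<le> 0" using start by blast
  next
    fix T :: real
    assume "T > 0" and "\<And>s. 0 \<le> s \<Longrightarrow> s < T \<Longrightarrow> \<forall>k. g k s \<le> 0"
    then show "\<forall>k. g k T \<le> 0"
      using DERIV_continuous[OF deriv] by (auto intro: nonpos_from_left)
  next
    fix t0 :: real
    assume "t0 \<ge> 0" and "\<forall>k. g k t0 \<le> 0"
    then have "eventually (\<lambda>s. g k s \<le> 0) (at_right t0)" for k
      using deriv boundary by (blast intro: eventually_nonpos_at_right)
    then show "eventually (\<lambda>s. \<forall>k. g k s \<le> 0) (at_right t0)"
      by (rule eventually_all_finite)
  qed
  then show ?thesis by blast
qed

lemma is_solution_const_if_equilibrium: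
  assumes "equilibrium f e"
  shows "is_solution f (\<lambda>_. e)"
  using assms by (simp add: is_solution_def equilibrium_def)

lemma globally_asymptotically_stable_unique_equilibrium:
  assumes "equilibrium f e'" and "globally_asymptotically_stable f e"
  shows "e' = e"
proof -
  have "((\<lambda>_::real. e') \<longlongrightarrow> e) at_top"
    using assms is_solution_const_if_equilibrium unfolding globally_asymptotically_stable_def by blast
  then show ?thesis by (simp add: tendsto_const_iff)
qed

lemma globally_asymptotically_stable_if_exponential_bound:
  fixes f :: "'v::real_normed_vector \<Rightarrow> 'v"
  assumes "c > 0"
    and bound: "\<And>x R t. is_solution f x \<Longrightarrow> dist (x 0) e < R \<Longrightarrow> t \<ge> 0
                  \<Longrightarrow> dist (x t) e \<le> K * R * exp (- c * t)"
  shows "globally_asymptotically_stable f e"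
  unfolding globally_asymptotically_stable_def lyapunov_stable_def
proof (intro conjI allI impI)
  fix \<epsilon> :: real assume "\<epsilon> > 0"
  define \<delta> where "\<delta> = \<epsilon> / (\<bar>K\<bar> + 1)"
  have "\<delta> > 0" using \<open>\<epsilon> > 0\<close> by (simp add: \<delta>_def)
  moreover have "dist (x t) e < \<epsilon>" if "is_solution f x" "dist (x 0) e < \<delta>" "t \<ge> 0" for x t
  proof -
    have "dist (x t) e \<le> K * \<delta> * exp (- c * t)" using bound that .
    also have "\<dots> \<le> \<bar>K\<bar> * \<delta> * 1"
      using \<open>\<delta> > 0\<close> \<open>c > 0\<close> \<open>t \<ge> 0\<close> by (intro mult_mono mult_right_mono) auto
    also have "\<dots> < \<epsilon>" using \<open>\<epsilon> > 0\<close> by (simp add: \<delta>_def field_simps)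
    finally show ?thesis .
  qed
  ultimately show "\<exists>\<delta>>0. \<forall>x. is_solution f x \<and> dist (x 0) e < \<delta> \<longrightarrow> (\<forall>t\<ge>0. dist (x t) e < \<epsilon>)"
    by blast
next
  fix x assume "is_solution f x"
  define R where "R = dist (x 0) e + 1"
  have decay: "dist (x t) e \<le> K * R * exp (- c * t)" if "t \<ge> 0" for t
    by (rule bound[OF \<open>is_solution f x\<close> _ that]) (simp add: R_def)
  have "eventually (\<lambda>t. norm (dist (x t) e) \<le> K * R * exp (- c * t)) at_top"
    using eventually_ge_at_top[of 0]
    by (rule eventually_mono) (simp only: real_norm_def abs_of_nonneg[OF zero_le_dist] decay)
  moreover have "((\<lambda>t. K * R * exp (- c * t)) \<longlongrightarrow> 0) at_top"
    using \<open>c > 0\<close> by (intro tendsto_mult_right_zero filterlim_compose[OF exp_at_bot]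
        filterlim_tendsto_neg_mult_at_bot tendsto_const filterlim_ident) auto
  ultimately have "((\<lambda>t. dist (x t) e) \<longlongrightarrow> 0) at_top"
    by (rule Lim_null_comparison)
  then show "(x \<longlongrightarrow> e) at_top"
    by (rule tendsto_dist_iff[THEN iffD2])
qed

text \<open>in_box a r is the closed ball of radius r of the weighted sup norm; its faces are the
  sets signed_coord k z = box_weight a k * r, where k picks a coordinate of x1 (Inl) or of
  x2 (Inr) and a sign.\<close>

definition in_box :: "real \<Rightarrow> real \<Rightarrow> (real ^ 'n::finite) \<times> (real ^ 'n) \<Rightarrow> bool" where
  "in_box a r z \<longleftrightarrow> (\<forall>i. \<bar>fst z $ i\<bar> \<le> a * r) \<and> (\<forall>i. \<bar>snd z $ i\<bar> \<le> r)"

definition signed_coord :: "('n + 'n) \<times> bool \<Rightarrow> (real ^ 'n::finite) \<times> (real ^ 'n) \<Rightarrow> real" where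
  "signed_coord k z =
     (if snd k then 1 else -1) * (case fst k of Inl i \<Rightarrow> fst z $ i | Inr i \<Rightarrow> snd z $ i)"

definition box_weight :: "real \<Rightarrow> ('n + 'n) \<times> bool \<Rightarrow> real" where
  "box_weight a k = (case fst k of Inl _ \<Rightarrow> a | Inr _ \<Rightarrow> 1)"

lemma in_box_iff_signed_coord_le:
  "in_box a r z \<longleftrightarrow> (\<forall>k. signed_coord k z \<le> box_weight a k * r)"
proof
  assume "in_box a r z"
  then show "\<forall>k. signed_coord k z \<le> box_weight a k * r"
    by (auto simp: in_box_def signed_coord_def box_weight_def abs_le_iff split: sum.splits)
next
  assume le: "\<forall>k. signed_coord k z \<le> box_weight a k * r"
  have "\<bar>fst z $ i\<bar> \<le> a * r" "\<bar>snd z $ i\<bar> \<le> r" for i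
    using le[rule_format, of "(Inl i, True)"] le[rule_format, of "(Inl i, False)"]
      le[rule_format, of "(Inr i, True)"] le[rule_format, of "(Inr i, False)"]
    by (simp_all add: signed_coord_def box_weight_def abs_le_iff)
  then show "in_box a r z" by (simp add: in_box_def)
qed

lemma bounded_linear_signed_coord: "bounded_linear (signed_coord k)"
proof -
  obtain j pos where k: "k = (j, pos)" by fastforce
  have "bounded_linear (\<lambda>z::(real ^ 'n) \<times> (real ^ 'n). fst z $ i)"
    "bounded_linear (\<lambda>z::(real ^ 'n) \<times> (real ^ 'n). snd z $ i)" for i
    by (auto intro: bounded_linear_compose[OF bounded_linear_vec_nth] bounded_linear_fst bounded_linear_snd)
  then show ?thesis
    unfolding k signed_coord_def
    by (cases j) (auto intro: bounded_linear_minus)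
qed

lemma has_real_derivative_signed_coord:
  assumes "(x has_vector_derivative v) F"
  shows "((\<lambda>t. signed_coord k (x t)) has_real_derivative signed_coord k v) F"
  using bounded_linear.has_vector_derivative[OF bounded_linear_signed_coord assms]
  by (simp add: has_real_derivative_iff_has_vector_derivative)

lemma in_box_if_norm_le:
  assumes "0 < a" "a \<le> 1" "norm z \<le> a * r"
  shows "in_box a r z"
proof -
  have "0 \<le> a * r" using assms(3) norm_ge_zero[of z] by linarith
  then have "r \<ge> 0" using \<open>0 < a\<close> by (simp add: zero_le_mult_iff)
  have "\<bar>fst z $ i\<bar> \<le> norm z" "\<bar>snd z $ i\<bar> \<le> norm z" for i
    using component_le_norm_cart[of "fst z" i] component_le_norm_cart[of "snd z" i]
      norm_fst_le[of "fst z" "snd z"] norm_snd_le[of "snd z" "fst z"] by simp_all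
  moreover have "a * r \<le> r" using mult_right_mono[OF \<open>a \<le> 1\<close> \<open>r \<ge> 0\<close>] by simp
  ultimately show ?thesis using assms(3) unfolding in_box_def by (meson order_trans)
qed

lemma norm_le_if_in_box:
  fixes z :: "(real ^ 'n::finite) \<times> (real ^ 'n)" and r :: real
  assumes "a \<le> 1" "in_box a r z"
  shows "norm z \<le> 2 * CARD('n) * r"
proof -
  have "r \<ge> 0" using assms(2) unfolding in_box_def by (meson abs_ge_zero order_trans)
  then have "a * r \<le> r" using mult_right_mono[OF \<open>a \<le> 1\<close>] by simp
  then have box: "\<bar>fst z $ i\<bar> \<le> r" "\<bar>snd z $ i\<bar> \<le> r" for i
    using assms(2) unfolding in_box_def by (meson order_trans)+
  have "norm z \<le> norm (fst z) + norm (snd z)"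
    using norm_Pair_le[of "fst z" "snd z"] by simp
  also have "\<dots> \<le> (\<Sum>i\<in>UNIV. \<bar>fst z $ i\<bar>) + (\<Sum>i\<in>UNIV. \<bar>snd z $ i\<bar>)"
    by (intro add_mono norm_le_l1_cart)
  also have "\<dots> \<le> (\<Sum>i\<in>(UNIV::'n set). r) + (\<Sum>i\<in>(UNIV::'n set). r)"
    by (intro add_mono sum_mono box)
  finally show ?thesis by (simp add: mult_ac)
qed

lemma abs_Mmax_le:
  assumes "\<And>i. \<bar>Q $ i\<bar> \<le> r"
  shows "\<bar>Mmax Q s\<bar> \<le> r"
proof -
  have "Mmax Q s \<in> (\<lambda>b. Q $ (s, b)) ` UNIV" unfolding Mmax_def
    by (rule Max_in) auto
  then show ?thesis using assms by auto
qed

lemma abs_Pmat_le: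
  assumes P_nonneg: "\<And>i s'. P i s' \<ge> 0"
    and P_sum: "\<And>i. (\<Sum>s'\<in>UNIV. P i s') = 1"
    and v: "\<And>s. \<bar>v s\<bar> \<le> r"
  shows "\<bar>Pmat P v $ i\<bar> \<le> r"
proof -
  have "\<bar>Pmat P v $ i\<bar> \<le> (\<Sum>s'\<in>UNIV. \<bar>P i s' * v s'\<bar>)"
    unfolding Pmat_def by simp
  also have "\<dots> \<le> (\<Sum>s'\<in>UNIV. P i s' * r)"
    using P_nonneg v by (intro sum_mono) (simp add: abs_mult mult_left_mono)
  also have "\<dots> = r"
    using P_sum[of i] by (simp add: sum_distrib_right[symmetric])
  finally show ?thesis .
qed

lemma hfield_nth:
  "fst (hfield d P \<gamma> \<beta> z) $ i = d i * (\<gamma> * Pmat P (Mmax (snd z)) $ i - fst z $ i)"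
  "snd (hfield d P \<gamma> \<beta> z) $ i = \<beta> * d i * (fst z $ i - snd z $ i)"
  by (cases z; simp add: hfield_def Dmat_def algebra_simps)+

lemma equilibrium_hfield_zero: "equilibrium (hfield d P \<gamma> \<beta>) 0"
  by (simp add: equilibrium_def hfield_def Dmat_def Pmat_def Mmax_def vec_eq_iff zero_prod_def)

lemma exists_box_rates:
  fixes d :: "'i::finite \<Rightarrow> real"
  assumes d_pos: "\<And>i. d i > 0" and "0 \<le> \<gamma>" "\<gamma> < 1" "\<beta> > 0"
  shows "\<exists>a c. 0 < a \<and> a \<le> 1 \<and> 0 < c
           \<and> (\<forall>i. c * a < d i * (a - \<gamma>)) \<and> (\<forall>i. c < \<beta> * d i * (1 - a))"
proof -
  define a where "a = (1 + \<gamma>) / 2"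
  define m where "m = Min (range d) * (1 - \<gamma>) / 2"
  define c where "c = min 1 \<beta> * m / 2"
  have "Min (range d) > 0" using d_pos by (simp add: Min_gr_iff)
  then have "m > 0" using \<open>\<gamma> < 1\<close> by (simp add: m_def)
  then have "0 < c" using \<open>\<beta> > 0\<close> by (simp add: c_def)
  have "0 < a" "a \<le> 1" using \<open>0 \<le> \<gamma>\<close> \<open>\<gamma> < 1\<close> by (simp_all add: a_def)
  have m_le: "m \<le> d i * (1 - \<gamma>) / 2" for i
    unfolding m_def using \<open>\<gamma> < 1\<close> by (intro divide_right_mono mult_right_mono) auto
  have "c * a < d i * (a - \<gamma>)" for i
  proof -
    have "c * a \<le> c" using \<open>0 < c\<close> \<open>a \<le> 1\<close> by (simp add: mult_left_le)
    also have "c < m" using \<open>m > 0\<close> by (simp add: c_def min_def)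
    also have "m \<le> d i * (a - \<gamma>)" using m_le[of i] by (simp add: a_def field_simps)
    finally show ?thesis .
  qed
  moreover have "c < \<beta> * d i * (1 - a)" for i
  proof -
    have "c < \<beta> * m" using \<open>m > 0\<close> \<open>\<beta> > 0\<close> by (simp add: c_def min_def)
    also have "\<dots> \<le> \<beta> * (d i * (1 - a))"
      using m_le[of i] \<open>\<beta> > 0\<close> by (intro mult_left_mono) (simp_all add: a_def field_simps)
    finally show ?thesis by (simp add: mult.assoc)
  qed
  ultimately show ?thesis using \<open>0 < a\<close> \<open>a \<le> 1\<close> \<open>0 < c\<close> by blast
qed

locale box_contraction =
  fixes d :: "'s::finite \<times> 'a::finite \<Rightarrow> real"
    and P :: "'s \<times> 'a \<Rightarrow> 's \<Rightarrow> real"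
    and \<gamma> \<beta> a c :: real
  assumes d_pos: "\<And>i. d i > 0"
    and P_nonneg: "\<And>i s'. P i s' \<ge> 0"
    and P_sum: "\<And>i. (\<Sum>s'\<in>UNIV. P i s') = 1"
    and gamma_nonneg: "0 \<le> \<gamma>"
    and beta_pos: "\<beta> > 0"
    and a_pos: "0 < a" and a_le_1: "a \<le> 1"
    and rate_fst: "\<And>i. c * a < d i * (a - \<gamma>)"
    and rate_snd: "\<And>i. c < \<beta> * d i * (1 - a)"
begin

abbreviation h where "h \<equiv> hfield d P \<gamma> \<beta>"

lemma hfield_points_into_box:
  assumes "r > 0" and box: "in_box a r z" and face: "signed_coord k z = box_weight a k * r"
  shows "signed_coord k (h z) < - c * (box_weight a k * r)"
proof -
  obtain j pos where k: "k = (j, pos)" by fastforce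
  define \<sigma> :: real where "\<sigma> = (if pos then 1 else -1)"
  have \<sigma>_le: "\<sigma> * y \<le> \<bar>y\<bar>" for y by (auto simp: \<sigma>_def)
  show ?thesis
  proof (cases j)
    case (Inl i)
    define v where "v = Pmat P (Mmax (snd z)) $ i"
    have "\<bar>Mmax (snd z) s\<bar> \<le> r" for s
      using box unfolding in_box_def by (intro abs_Mmax_le) blast
    then have "\<bar>v\<bar> \<le> r"
      unfolding v_def by (rule abs_Pmat_le[OF P_nonneg P_sum])
    then have "\<gamma> * (\<sigma> * v) \<le> \<gamma> * r"
      using \<sigma>_le[of v] gamma_nonneg by (intro mult_left_mono) auto
    have "\<sigma> * fst z $ i = a * r"
      using face by (simp add: k Inl \<sigma>_def signed_coord_def box_weight_def)
    then have "signed_coord k (h z) = d i * (\<gamma> * (\<sigma> * v) - a * r)"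
      by (auto simp: k Inl signed_coord_def hfield_nth \<sigma>_def v_def algebra_simps)
    also have "\<dots> \<le> d i * (\<gamma> * r - a * r)"
      using d_pos[of i] \<open>\<gamma> * (\<sigma> * v) \<le> \<gamma> * r\<close> by (intro mult_left_mono) auto
    also have "\<dots> < - c * (box_weight a k * r)"
      using mult_strict_right_mono[OF rate_fst[of i] \<open>r > 0\<close>]
      by (simp add: k Inl box_weight_def algebra_simps)
    finally show ?thesis .
  next
    case (Inr i)
    have "\<sigma> * fst z $ i \<le> a * r"
      using box \<sigma>_le[of "fst z $ i"] unfolding in_box_def by (blast intro: order_trans)
    have "\<sigma> * snd z $ i = r"
      using face by (simp add: k Inr \<sigma>_def signed_coord_def box_weight_def)
    then have "signed_coord k (h z) = \<beta> * d i * (\<sigma> * fst z $ i - r)"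
      by (auto simp: k Inr signed_coord_def hfield_nth \<sigma>_def algebra_simps)
    also have "\<dots> \<le> \<beta> * d i * (a * r - r)"
      using d_pos[of i] beta_pos \<open>\<sigma> * fst z $ i \<le> a * r\<close> by (intro mult_left_mono) auto
    also have "\<dots> < - c * (box_weight a k * r)"
      using mult_strict_right_mono[OF rate_snd[of i] \<open>r > 0\<close>]
      by (simp add: k Inr box_weight_def algebra_simps)
    finally show ?thesis .
  qed
qed

lemma box_decay:
  assumes sol: "is_solution h x" and "R > 0" and init: "in_box a R (x 0)" and "t \<ge> 0"
  shows "in_box a (R * exp (- c * t)) (x t)"
proof -
  define env where "env t = R * exp (- c * t)" for t
  define g where "g k t = signed_coord k (x t) - box_weight a k * env t" for k t
  define g' where "g' k t = signed_coord k (h (x t)) + c * (box_weight a k * env t)" for k t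
  have "g k t \<le> 0" for k
  proof (rule finite_family_barrier[of g g'])
    fix k and s :: real
    assume "s \<ge> 0"
    then have "(x has_vector_derivative h (x s)) (at s within {0..})"
      using sol by (simp add: is_solution_def)
    then show "(g k has_real_derivative g' k s) (at s within {0..})"
      unfolding g_def[abs_def] g'_def env_def
      by (auto intro!: derivative_eq_intros has_real_derivative_signed_coord simp: algebra_simps)
  next
    show "g k 0 \<le> 0" for k
      using init[unfolded in_box_iff_signed_coord_le, rule_format, of k]
      by (simp add: g_def env_def)
  next
    fix k s
    assume "(\<And>j. g j s \<le> 0)" "g k s = 0"
    then have "in_box a (env s) (x s)" "signed_coord k (x s) = box_weight a k * env s"
      by (simp_all add: g_def in_box_iff_signed_coord_le)
    moreover have "env s > 0" using \<open>R > 0\<close> by (simp add: env_def)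
    ultimately have "signed_coord k (h (x s)) < - c * (box_weight a k * env s)"
      using hfield_points_into_box by blast
    then show "g' k s < 0" by (simp add: g'_def)
  qed (rule \<open>t \<ge> 0\<close>)
  then show ?thesis by (simp add: in_box_iff_signed_coord_le g_def env_def)
qed

lemma norm_decay:
  assumes "is_solution h x" and "norm (x 0) < \<rho>" and "t \<ge> 0"
  shows "norm (x t) \<le> 2 * CARD('s \<times> 'a) / a * \<rho> * exp (- c * t)"
proof -
  define R where "R = \<rho> / a"
  have "\<rho> > 0" using assms(2) norm_ge_zero[of "x 0"] by linarith
  then have "R > 0" using a_pos by (simp add: R_def)
  have "in_box a R (x 0)"
    using assms(2) a_pos a_le_1 by (intro in_box_if_norm_le) (auto simp: R_def)
  then have "in_box a (R * exp (- c * t)) (x t)"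
    using box_decay assms(1,3) \<open>R > 0\<close> by blast
  then have "norm (x t) \<le> 2 * CARD('s \<times> 'a) * (R * exp (- c * t))"
    using a_le_1 by (intro norm_le_if_in_box)
  then show ?thesis by (simp add: R_def)
qed

end

theorem mainTheorem10:
  fixes d :: "'s::finite \<times> 'a::finite \<Rightarrow> real"
    and P :: "'s \<times> 'a \<Rightarrow> 's \<Rightarrow> real"
    and \<gamma> \<beta> :: real
  assumes d_pos: "\<And>i. d i > 0"
    and d_sum: "(\<Sum>i\<in>UNIV. d i) = 1"
    and P_nonneg: "\<And>i s'. P i s' \<ge> 0"
    and P_sum: "\<And>i. (\<Sum>s'\<in>UNIV. P i s') = 1"
    and gamma: "0 \<le> \<gamma>" "\<gamma> < 1"
    and beta: "\<beta> > 0"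
  shows "\<forall>e. (equilibrium (hfield d P \<gamma> \<beta>) e \<and> globally_asymptotically_stable (hfield d P \<gamma> \<beta>) e)
              \<longleftrightarrow> e = 0"
proof -
  obtain a c where "0 < a" "a \<le> 1" "0 < c"
    and rates: "\<And>i. c * a < d i * (a - \<gamma>)" "\<And>i. c < \<beta> * d i * (1 - a)"
    using exists_box_rates[of d, OF d_pos gamma beta] by blast
  interpret box_contraction d P \<gamma> \<beta> a c
    using d_pos P_nonneg P_sum gamma beta \<open>0 < a\<close> \<open>a \<le> 1\<close> rates by unfold_locales
  have "globally_asymptotically_stable (hfield d P \<gamma> \<beta>) 0"
  proof (rule globally_asymptotically_stable_if_exponential_bound[OF \<open>0 < c\<close>])
    fix x and R t :: real
    assume "is_solution (hfield d P \<gamma> \<beta>) x" "dist (x 0) 0 < R" "t \<ge> 0"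
    then show "dist (x t) 0 \<le> 2 * CARD('s \<times> 'a) / a * R * exp (- c * t)"
      using norm_decay by simp
  qed
  then show ?thesis
    using equilibrium_hfield_zero globally_asymptotically_stable_unique_equilibrium by blast
qed

end
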